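(* Let $(N,\{S_i\}_{i\in N},S,\{f_i\}_{i\in N})$ be a supermodular game such that $S$ is a subcomplete sublattice of $\prod_{i\in N}S_i$. Suppose that for every $i\in N$ and every $x\in S$, the function $f_i(\cdot,x_{-i}):S_i(x_{-i})\to\mathbb{R}$ is downward upper semicontinuous. Then for every $i\in N$, every $x\in S$ and every nonempty chain $C\subset S(x)$, there is $b\in S(x)$ such that $b\le c$ for every $c\in C$ and $f_i(b_i,x_{-i})\ge\limsup_{c\in C,c\to\inf_S C}f_i(c_i,x_{-i})$.
   Context: A subset $T$ of a poset $P$ is a subcomplete sublattice of $P$ if for every nonempty $A\subset T$, $\sup_P A$ and $\inf_P A$ exist and belong to $T$; $P$ is a complete lattice if it is a subcomplete sublattice of itself. A supermodular game $(N,\{S_i\},S,\{f_i\})$ consists of: a nonempty finite set $N$ of players; for each $i\in N$ a nonempty lattice $S_i$; a nonempty sublattice $S\subset\prod_{i\in N}S_i$ (product order) such that every projection $S\to S_i$ is surjective; and for each $i\in N$ a function $f_i:S\to\mathbb{R}$; such that for every $i\in N$: (1) for every $x_{-i}\in S_{-i}:=\prod_{j\ne i}S_j$, the function $f_i(\cdot,x_{-i})$ is supermodular on the sublattice $S_i(x_{-i}):=\{x_i\in S_i:(x_i,x_{-i})\in S\}$ of $S_i$; (2) $f_i$ has increasing differences on $S$ viewed as a subset of $S_i\times S_{-i}$: whenever $x_i\le x_i'$, $x_{-i}\le x_{-i}'$ and the four points $(x_i,x_{-i}),(x_i',x_{-i}),(x_i,x_{-i}'),(x_i',x_{-i}')$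 lie in $S$, one has $f_i(x_i',x_{-i})-f_i(x_i,x_{-i})\le f_i(x_i',x_{-i}')-f_i(x_i,x_{-i}')$. For $x\in S$, $S(x):=\left(\prod_{i\in N}S_i(x_{-i})\right)\cap S$. For a chain $C$ in a poset and a real function $g$ on $C$, $\limsup_{c\in C,c\to\inf C}g(c):=\inf_{c'\in C}\sup\{g(c):c\in C,c\le c'\}$. For a complete lattice $X$, a function $f:X\to\mathbb{R}$ is downward upper semicontinuous if for every nonempty chain $C\subset X$, $\limsup_{x\in C,x\to\inf_X C}f(x)\le f(\inf_X C)$. (Under the hypotheses, each $S_i(x_{-i})$ is a complete lattice.) *)

theory Defs
  imports Complex_Main "HOL-Library.FuncSet" "HOL-Library.Extended_Real"
begin

text \<open>Strategy profiles are functions 'n => 'a in the extensional product PiE N Si,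
  ordered pointwise (the library order on functions), which is the product order.\<close>

definition is_sup_in :: "'b::order set \<Rightarrow> 'b set \<Rightarrow> 'b \<Rightarrow> bool" where
  "is_sup_in P A s \<longleftrightarrow> s \<in> P \<and> (\<forall>a\<in>A. a \<le> s) \<and> (\<forall>u\<in>P. (\<forall>a\<in>A. a \<le> u) \<longrightarrow> s \<le> u)"

definition is_inf_in :: "'b::order set \<Rightarrow> 'b set \<Rightarrow> 'b \<Rightarrow> bool" where
  "is_inf_in P A s \<longleftrightarrow> s \<in> P \<and> (\<forall>a\<in>A. s \<le> a) \<and> (\<forall>u\<in>P. (\<forall>a\<in>A. u \<le> a) \<longrightarrow> u \<le> s)"

definition lattice_on :: "'b::order set \<Rightarrow> bool" where
  "lattice_on P \<longleftrightarrow> (\<forall>x\<in>P. \<forall>y\<in>P. (\<exists>s. is_sup_in P {x, y} s) \<and> (\<exists>t. is_inf_in P {x, y} t))"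

definition sublattice_of :: "'b::order set \<Rightarrow> 'b set \<Rightarrow> bool" where
  "sublattice_of T P \<longleftrightarrow> T \<subseteq> P \<and>
     (\<forall>x\<in>T. \<forall>y\<in>T. (\<exists>s. is_sup_in P {x, y} s \<and> s \<in> T) \<and> (\<exists>t. is_inf_in P {x, y} t \<and> t \<in> T))"

definition subcomplete_sublattice_of :: "'b::order set \<Rightarrow> 'b set \<Rightarrow> bool" where
  "subcomplete_sublattice_of T P \<longleftrightarrow> T \<subseteq> P \<and>
     (\<forall>A. A \<subseteq> T \<longrightarrow> A \<noteq> {} \<longrightarrow>
        (\<exists>s. is_sup_in P A s \<and> s \<in> T) \<and> (\<exists>t. is_inf_in P A t \<and> t \<in> T))"

definition chain_in :: "'b::order set \<Rightarrow> bool" where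
  "chain_in C \<longleftrightarrow> (\<forall>x\<in>C. \<forall>y\<in>C. x \<le> y \<or> y \<le> x)"

definition supermodular_on :: "'b::order set \<Rightarrow> 'b set \<Rightarrow> ('b \<Rightarrow> real) \<Rightarrow> bool" where
  "supermodular_on X L g \<longleftrightarrow>
     (\<forall>a\<in>L. \<forall>b\<in>L. \<forall>s t. is_sup_in X {a, b} s \<longrightarrow> is_inf_in X {a, b} t \<longrightarrow>
        g a + g b \<le> g s + g t)"

text \<open>S_i(x_{-i}) = {a in S_i. (a, x_{-i}) in S}; the profile (a, x_{-i}) is x(i := a).\<close>
definition sect :: "('n \<Rightarrow> 'a set) \<Rightarrow> ('n \<Rightarrow> 'a) set \<Rightarrow> 'n \<Rightarrow> ('n \<Rightarrow> 'a) \<Rightarrow> 'a set" where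
  "sect Si S i x = {a \<in> Si i. x(i := a) \<in> S}"

definition Sx :: "'n set \<Rightarrow> ('n \<Rightarrow> 'a set) \<Rightarrow> ('n \<Rightarrow> 'a) set \<Rightarrow> ('n \<Rightarrow> 'a) \<Rightarrow> ('n \<Rightarrow> 'a) set" where
  "Sx N Si S x = {y \<in> S. \<forall>i\<in>N. y i \<in> sect Si S i x}"

definition supermodular_game ::
  "'n set \<Rightarrow> ('n \<Rightarrow> 'a::order set) \<Rightarrow> ('n \<Rightarrow> 'a) set \<Rightarrow> ('n \<Rightarrow> ('n \<Rightarrow> 'a) \<Rightarrow> real) \<Rightarrow> bool" where
  "supermodular_game N Si S f \<longleftrightarrow>
     finite N \<and> N \<noteq> {} \<and>
     (\<forall>i\<in>N. Si i \<noteq> {} \<and> lattice_on (Si i)) \<and>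
     S \<noteq> {} \<and> sublattice_of S (Pi\<^sub>E N Si) \<and>
     (\<forall>i\<in>N. \<forall>a\<in>Si i. \<exists>x\<in>S. x i = a) \<and>
     (\<forall>i\<in>N.
        (\<forall>y\<in>Pi\<^sub>E N Si. supermodular_on (Si i) (sect Si S i y) (\<lambda>a. f i (y(i := a)))) \<and>
        (\<forall>a\<in>Si i. \<forall>a2\<in>Si i. \<forall>y\<in>Pi\<^sub>E N Si. \<forall>y2\<in>Pi\<^sub>E N Si.
            a \<le> a2 \<longrightarrow> (\<forall>j\<in>N - {i}. y j \<le> y2 j) \<longrightarrow>
            y(i := a) \<in> S \<longrightarrow> y(i := a2) \<in> S \<longrightarrow> y2(i := a) \<in> S \<longrightarrow> y2(i := a2) \<in> S \<longrightarrow>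
            f i (y(i := a2)) - f i (y(i := a)) \<le> f i (y2(i := a2)) - f i (y2(i := a))))"

text \<open>limsup_{c in C, c -> inf C} g(c) := inf_{c' in C} sup {g c. c in C, c <= c'},
  taken in the extended reals (so it is always defined).\<close>
definition chain_limsup :: "'b::order set \<Rightarrow> ('b \<Rightarrow> real) \<Rightarrow> ereal" where
  "chain_limsup C g = (INF c'\<in>C. SUP c\<in>{c \<in> C. c \<le> c'}. ereal (g c))"

definition downward_usc_on :: "'b::order set \<Rightarrow> ('b \<Rightarrow> real) \<Rightarrow> bool" where
  "downward_usc_on X g \<longleftrightarrow>
     (\<forall>C m. C \<subseteq> X \<longrightarrow> C \<noteq> {} \<longrightarrow> chain_in C \<longrightarrow> is_inf_in X C m \<longrightarrow>
        chain_limsup C g \<le> ereal (g m))"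

end

theory Submission
  imports Defs
begin

text \<open>Subcompleteness gives an infimum \<open>m \<in> S\<close> of the chain \<open>C\<close> in the product. For every
  player \<open>j\<close>, the infimum of the profiles \<open>x(j := c j)\<close>, \<open>c \<in> C\<close>, is \<open>x(j := m j)\<close> because
  infima in a product are computed coordinatewise; by subcompleteness it lies in \<open>S\<close>, so
  \<open>m \<in> S(x)\<close>. Projecting to coordinate \<open>i\<close>, \<open>m i\<close> is the infimum in \<open>S\<^sub>i(x\<^sub>-\<^sub>i)\<close> of the chain
  \<open>{c i | c \<in> C}\<close>, so downward upper semicontinuity bounds the limsup along that chain by
  \<open>f\<^sub>i(m i, x\<^sub>-\<^sub>i)\<close>; the limsup along \<open>C\<close> is no larger, as projection is monotone.\<close>

lemma is_inf_in_unique: "is_inf_in P A s \<Longrightarrow> is_inf_in P A t \<Longrightarrow> s = t"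
  unfolding is_inf_in_def by (blast intro: order.antisym)

lemma is_inf_in_subset: "is_inf_in P A s \<Longrightarrow> Q \<subseteq> P \<Longrightarrow> s \<in> Q \<Longrightarrow> is_inf_in Q A s"
  unfolding is_inf_in_def by blast

lemma is_inf_in_PiE_component:
  assumes inf: "is_inf_in (Pi\<^sub>E N Si) A s" and j: "j \<in> N"
  shows "is_inf_in (Si j) ((\<lambda>a. a j) ` A) (s j)"
  unfolding is_inf_in_def
proof (intro conjI ballI impI)
  have s: "s \<in> Pi\<^sub>E N Si" and s_le: "\<forall>a\<in>A. s \<le> a"
    using inf unfolding is_inf_in_def by blast+
  then show "s j \<in> Si j" using j by blast
  show "s j \<le> b" if "b \<in> (\<lambda>a. a j) ` A" for b
    using that s_le by (auto dest: le_funD)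
  fix u assume u: "u \<in> Si j" "\<forall>b\<in>(\<lambda>a. a j) ` A. u \<le> b"
  have "s(j := u) \<in> Pi\<^sub>E N Si"
    using PiE_fun_upd[OF u(1) s] j by (simp add: insert_absorb)
  moreover have "\<forall>a\<in>A. s(j := u) \<le> a"
    using s_le u(2) by (auto simp: le_fun_def)
  ultimately have "s(j := u) \<le> s"
    using inf unfolding is_inf_in_def by blast
  then show "u \<le> s j" by (auto dest: le_funD[where x = j])
qed

lemma is_inf_in_PiE_update:
  assumes inf: "is_inf_in (Pi\<^sub>E N Si) C m" and x: "x \<in> Pi\<^sub>E N Si"
    and j: "j \<in> N" and C: "C \<noteq> {}"
  shows "is_inf_in (Pi\<^sub>E N Si) ((\<lambda>c. x(j := c j)) ` C) (x(j := m j))"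
  unfolding is_inf_in_def
proof (intro conjI ballI impI)
  have m_le: "\<forall>c\<in>C. m \<le> c" using inf unfolding is_inf_in_def by blast
  have "m j \<in> Si j" using is_inf_in_PiE_component[OF inf j] unfolding is_inf_in_def by blast
  from PiE_fun_upd[OF this x] j show "x(j := m j) \<in> Pi\<^sub>E N Si"
    by (simp add: insert_absorb)
  show "x(j := m j) \<le> y" if "y \<in> (\<lambda>c. x(j := c j)) ` C" for y
    using that m_le by (auto simp: le_fun_def)
  fix u assume u: "u \<in> Pi\<^sub>E N Si" "\<forall>y\<in>(\<lambda>c. x(j := c j)) ` C. u \<le> y"
  then have u_le: "u \<le> x(j := c j)" if "c \<in> C" for c
    using that by blast
  have "u j \<le> m j"
    using is_inf_in_PiE_component[OF inf j] PiE_mem[OF u(1) j] le_funD[OF u_le, of _ j]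
    unfolding is_inf_in_def by auto
  moreover obtain c0 where "c0 \<in> C" using C by blast
  then have "u k \<le> x k" if "k \<noteq> j" for k
    using le_funD[OF u_le, of c0 k] that by simp
  ultimately show "u \<le> x(j := m j)" by (simp add: le_fun_def)
qed

lemma subcomplete_Sx_inf:
  assumes sub: "subcomplete_sublattice_of S (Pi\<^sub>E N Si)"
    and x: "x \<in> S" and C: "C \<subseteq> Sx N Si S x" "C \<noteq> {}"
  obtains m where "m \<in> Sx N Si S x" "is_inf_in (Pi\<^sub>E N Si) C m"
proof -
  have S_sub: "S \<subseteq> Pi\<^sub>E N Si"
    and S_inf: "\<And>A. A \<subseteq> S \<Longrightarrow> A \<noteq> {} \<Longrightarrow> \<exists>t. is_inf_in (Pi\<^sub>E N Si) A t \<and> t \<in> S"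
    using sub unfolding subcomplete_sublattice_of_def by blast+
  have "C \<subseteq> S" using C(1) unfolding Sx_def by blast
  then obtain m where inf: "is_inf_in (Pi\<^sub>E N Si) C m" and m: "m \<in> S"
    using S_inf C(2) by blast
  have "m j \<in> sect Si S j x" if j: "j \<in> N" for j
  proof -
    have "(\<lambda>c. x(j := c j)) ` C \<subseteq> S"
      using C(1) j unfolding Sx_def sect_def by blast
    then obtain t where "is_inf_in (Pi\<^sub>E N Si) ((\<lambda>c. x(j := c j)) ` C) t" "t \<in> S"
      using S_inf C(2) by blast
    with is_inf_in_PiE_update[OF inf _ j C(2)] x S_sub
    have "x(j := m j) \<in> S" using is_inf_in_unique by blast
    moreover have "m j \<in> Si j" using m S_sub j by blast
    ultimately show ?thesis unfolding sect_def by blast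
  qed
  with m have "m \<in> Sx N Si S x" unfolding Sx_def by blast
  then show thesis using inf by (rule that)
qed

lemma downward_usc_onD:
  "downward_usc_on X g \<Longrightarrow> C \<subseteq> X \<Longrightarrow> C \<noteq> {} \<Longrightarrow> chain_in C \<Longrightarrow> is_inf_in X C m
    \<Longrightarrow> chain_limsup C g \<le> ereal (g m)"
  unfolding downward_usc_on_def by blast

lemma chain_in_image_mono: "chain_in C \<Longrightarrow> mono h \<Longrightarrow> chain_in (h ` C)"
  unfolding chain_in_def by (auto dest: monoD)

lemma chain_limsup_comp_mono_le:
  assumes "mono h"
  shows "chain_limsup C (\<lambda>c. g (h c)) \<le> chain_limsup (h ` C) g"
  unfolding chain_limsup_def
proof (rule INF_mono)
  fix b' assume "b' \<in> h ` C"
  then obtain c' where c': "c' \<in> C" "b' = h c'" by blast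
  have "(SUP c\<in>{c \<in> C. c \<le> c'}. ereal (g (h c))) \<le> (SUP b\<in>{b \<in> h ` C. b \<le> b'}. ereal (g b))"
    using c'(2) by (intro SUP_mono) (auto dest: monoD[OF assms])
  with c'(1) show "\<exists>c'\<in>C. (SUP c\<in>{c \<in> C. c \<le> c'}. ereal (g (h c)))
      \<le> (SUP b\<in>{b \<in> h ` C. b \<le> b'}. ereal (g b))" by blast
qed

theorem lemma5p7:
  fixes N :: "'n set" and Si :: "'n \<Rightarrow> 'a::order set" and S :: "('n \<Rightarrow> 'a) set"
    and f :: "'n \<Rightarrow> ('n \<Rightarrow> 'a) \<Rightarrow> real"
  assumes game: "supermodular_game N Si S f"
    and subcomplete: "subcomplete_sublattice_of S (Pi\<^sub>E N Si)"
    and usc: "\<And>i x. i \<in> N \<Longrightarrow> x \<in> S \<Longrightarrow> downward_usc_on (sect Si S i x) (\<lambda>a. f i (x(i := a)))"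
  shows "\<forall>i\<in>N. \<forall>x\<in>S. \<forall>C. C \<subseteq> Sx N Si S x \<longrightarrow> C \<noteq> {} \<longrightarrow> chain_in C \<longrightarrow>
           (\<exists>b\<in>Sx N Si S x. (\<forall>c\<in>C. b \<le> c) \<and>
              chain_limsup C (\<lambda>c. f i (x(i := c i))) \<le> ereal (f i (x(i := b i))))"
proof (intro ballI allI impI)
  fix i x C
  assume i: "i \<in> N" and x: "x \<in> S" and C: "C \<subseteq> Sx N Si S x" "C \<noteq> {}" "chain_in C"
  obtain m where m: "m \<in> Sx N Si S x" and inf: "is_inf_in (Pi\<^sub>E N Si) C m"
    using subcomplete_Sx_inf[OF subcomplete x C(1,2)] .
  have proj_mono: "mono (\<lambda>c::'n \<Rightarrow> 'a. c i)" by (auto intro: monoI dest: le_funD)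
  have proj_sect: "(\<lambda>c. c i) ` C \<subseteq> sect Si S i x" and m_sect: "m i \<in> sect Si S i x"
    using C(1) m i unfolding Sx_def by blast+
  have "is_inf_in (sect Si S i x) ((\<lambda>c. c i) ` C) (m i)"
    using is_inf_in_subset[OF is_inf_in_PiE_component[OF inf i] _ m_sect]
    by (simp add: sect_def)
  from downward_usc_onD[OF usc[OF i x] proj_sect _ chain_in_image_mono[OF C(3) proj_mono] this]
  have "chain_limsup ((\<lambda>c. c i) ` C) (\<lambda>a. f i (x(i := a))) \<le> ereal (f i (x(i := m i)))"
    using C(2) by blast
  then have "chain_limsup C (\<lambda>c. f i (x(i := c i))) \<le> ereal (f i (x(i := m i)))"
    using chain_limsup_comp_mono_le[OF proj_mono] order_trans by blast
  moreover have "\<forall>c\<in>C. m \<le> c" using inf unfolding is_inf_in_def by blast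
  ultimately show "\<exists>b\<in>Sx N Si S x. (\<forall>c\<in>C. b \<le> c) \<and>
      chain_limsup C (\<lambda>c. f i (x(i := c i))) \<le> ereal (f i (x(i := b i)))"
    using m by blast
qed

end
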